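(* Let $V$ be a finite set with positive element weights ($\vert A \vert$ = total weight of $A \subseteq V$), let $\mathcal{P}, \mathcal{P}'$ be partitions of $V$ into nonempty parts, and let $P_i', P_j' \in \mathcal{P}'$ be distinct. For $\mathcal{S} \subseteq \mathcal{P}$ define $$\phi^*_{i',j'}(\mathcal{S}) := \vert U_{\mathcal{S}} \cap P_j' \vert + \vert P_i' \vert - \vert U_{\mathcal{S}} \cap P_i' \vert + \sum_{P' \in \mathcal{P}' \setminus \{P_i', P_j'\}} \vert P' \vert \operatorname{peak}\Big(\frac{\vert U_{\mathcal{S}} \cap P' \vert}{\vert P' \vert}\Big).$$ Let $\mathcal{S}$ minimize $\phi^*_{i',j'}$ over all $\emptyset \ne \mathcal{S} \subsetneq \mathcal{P}$, and set $\mathcal{S}' := \{P_i'\} \cup \{P' \in \mathcal{P}' \setminus \{P_i', P_j'\} : \vert U_{\mathcal{S}} \cap P' \vert > \vert P' \vert/2\}$. Then $(\mathcal{S}, \mathcal{S}')$ is an optimal $C_{\wedge}$-correspondence under the constraint $P_i' \in \mathcal{S}'$ and $P_j' \in \mathcal{P}' \setminus \mathcal{S}'$, i.e. it minimizes $\vert U_{\mathcal{S}} \triangle U_{\mathcal{S}'} \vert$ among all pairs with $\emptyset \ne \mathcal{S} \subsetneq \mathcal{P}$, $\mathcal{S}' \subseteq \mathcal{P}'$, $P_i' \in \mathcal{S}'$, $P_j' \notin \mathcal{S}'$.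
   Context: $U_{\mathcal{S}}$ denotes the union of the sets in $\mathcal{S}$; $\triangle$ is symmetric difference; $\operatorname{peak}(x) = x$ for $x \le 1/2$ and $1 - x$ for $x > 1/2$. A $C_{\wedge}$-correspondence is a pair $(\mathcal{S}, \mathcal{S}')$ with $\mathcal{S} \subseteq \mathcal{P}$, $\mathcal{S}' \subseteq \mathcal{P}'$, $\mathcal{S} \notin \{\emptyset, \mathcal{P}\}$ and $\mathcal{S}' \notin \{\emptyset, \mathcal{P}'\}$ (automatic under the constraint above). *)

theory Defs
  imports "HOL-Analysis.Analysis"
begin

definition is_partition :: "'a set \<Rightarrow> 'a set set \<Rightarrow> bool" where
  "is_partition V P \<longleftrightarrow> (\<Union>P = V) \<and> (\<forall>A\<in>P. A \<noteq> {}) \<and>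
     (\<forall>A\<in>P. \<forall>B\<in>P. A \<noteq> B \<longrightarrow> A \<inter> B = {})"

definition wt :: "('a \<Rightarrow> real) \<Rightarrow> 'a set \<Rightarrow> real" where
  "wt w A = sum w A"

definition peak :: "real \<Rightarrow> real" where
  "peak x = (if x \<le> 1/2 then x else 1 - x)"

definition phi_star :: "('a \<Rightarrow> real) \<Rightarrow> 'a set set \<Rightarrow> 'a set \<Rightarrow> 'a set \<Rightarrow> 'a set set \<Rightarrow> real" where
  "phi_star w P' Pa Pb S =
     wt w (\<Union>S \<inter> Pb) + wt w Pa - wt w (\<Union>S \<inter> Pa)
     + (\<Sum>Q\<in>P' - {Pa, Pb}. wt w Q * peak (wt w (\<Union>S \<inter> Q) / wt w Q))"

end

theory Submission
  imports Defs
begin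

text \<open>Split the symmetric difference along the parts of \<open>\<P>'\<close>: a part \<open>Q \<in> \<S>'\<close>
  costs \<open>|Q| - |U \<inter> Q|\<close> and a part \<open>Q \<notin> \<S>'\<close> costs \<open>|U \<inter> Q|\<close>. The parts \<open>P\<^sub>i'\<close>
  and \<open>P\<^sub>j'\<close> have their membership forced, which produces the first three terms of
  \<open>\<phi>\<^sup>*\<close>. Every other part costs at least \<open>min(|U \<inter> Q|, |Q| - |U \<inter> Q|) = |Q| peak(|U \<inter> Q|/|Q|)\<close>,
  so \<open>\<phi>\<^sup>*(\<S>)\<close> is a lower bound for the cost of every pair \<open>(\<S>, \<S>')\<close>, attained when
  \<open>\<S>'\<close> takes exactly the parts that \<open>U\<^sub>\<S>\<close> covers by more than half.\<close>

definition part_cost :: "('a \<Rightarrow> real) \<Rightarrow> 'a set \<Rightarrow> 'a set set \<Rightarrow> 'a set \<Rightarrow> real" where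
  "part_cost w U T' Q = (if Q \<in> T' then wt w Q - wt w (U \<inter> Q) else wt w (U \<inter> Q))"

lemma peak_scaled_eq_min:
  assumes "0 < q" "0 \<le> x" "x \<le> q"
  shows "q * peak (x / q) = min x (q - x)"
proof (cases "x / q \<le> 1/2")
  case True
  hence "x \<le> q/2" using assms by (simp add: field_simps)
  thus ?thesis using True assms by (simp add: peak_def min_def)
next
  case False
  hence "x > q/2" using assms by (simp add: field_simps)
  thus ?thesis using False assms by (simp add: peak_def min_def field_simps)
qed

lemma wt_pos:
  assumes "finite A" "A \<noteq> {}" "\<And>v. v \<in> A \<Longrightarrow> w v > 0"
  shows "wt w A > 0"
  using assms unfolding wt_def by (metis sum_pos)

lemma wt_Int_bounds:
  assumes "finite A" "\<And>v. v \<in> A \<Longrightarrow> 0 \<le> w v"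
  shows "0 \<le> wt w (U \<inter> A)" "wt w (U \<inter> A) \<le> wt w A"
  using assms unfolding wt_def by (auto intro: sum_nonneg sum_mono2)

lemma is_partition_finite:
  assumes "finite V" "is_partition V P"
  shows "finite P" "\<And>Q. Q \<in> P \<Longrightarrow> finite Q"
  using assms unfolding is_partition_def by (auto intro: finite_UnionD finite_subset)

lemma peak_le_part_cost:
  assumes "0 < wt w Q" "0 \<le> wt w (U \<inter> Q)" "wt w (U \<inter> Q) \<le> wt w Q"
  shows "wt w Q * peak (wt w (U \<inter> Q) / wt w Q) \<le> part_cost w U T' Q"
  using peak_scaled_eq_min[OF assms] unfolding part_cost_def by auto

lemma part_cost_majority_eq_peak:
  assumes "0 < wt w Q" "0 \<le> wt w (U \<inter> Q)" "wt w (U \<inter> Q) \<le> wt w Q"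
    and "Q \<in> T' \<longleftrightarrow> wt w (U \<inter> Q) > wt w Q / 2"
  shows "part_cost w U T' Q = wt w Q * peak (wt w (U \<inter> Q) / wt w Q)"
  using peak_scaled_eq_min[OF assms(1-3)] assms(4) unfolding part_cost_def by (simp add: min_def)

lemma wt_sym_diff_Union_eq_sum_part_cost:
  assumes fin: "finite V" and part: "is_partition V P'" and "U \<subseteq> V" and "T' \<subseteq> P'"
  shows "wt w (sym_diff U (\<Union>T')) = (\<Sum>Q\<in>P'. part_cost w U T' Q)"
proof -
  have UP: "\<Union>P' = V" and disj: "\<And>A B. A \<in> P' \<Longrightarrow> B \<in> P' \<Longrightarrow> A \<noteq> B \<Longrightarrow> A \<inter> B = {}"
    using part unfolding is_partition_def by auto
  note finite = is_partition_finite[OF fin part]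
  let ?X = "sym_diff U (\<Union>T')"
  have X: "?X = (\<Union>Q\<in>P'. ?X \<inter> Q)" using assms UP by auto
  have "wt w ?X = (\<Sum>Q\<in>P'. wt w (?X \<inter> Q))"
    unfolding wt_def by (subst X, rule sum.UNION_disjoint) (use finite disj in auto)
  also have "\<dots> = (\<Sum>Q\<in>P'. part_cost w U T' Q)"
  proof (rule sum.cong[OF refl])
    fix Q assume Q: "Q \<in> P'"
    show "wt w (?X \<inter> Q) = part_cost w U T' Q"
    proof (cases "Q \<in> T'")
      case True
      hence "?X \<inter> Q = Q - U \<inter> Q" by auto
      thus ?thesis using True finite(2)[OF Q] unfolding part_cost_def wt_def by (simp add: sum_diff)
    next
      case False
      hence "\<Union>T' \<inter> Q = {}" using assms(4) disj Q by blast
      hence "?X \<inter> Q = U \<inter> Q" by auto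
      thus ?thesis using False unfolding part_cost_def by simp
    qed
  qed
  finally show ?thesis .
qed

lemma wt_sym_diff_Union_split:
  assumes "finite V" "is_partition V P'" "U \<subseteq> V" "T' \<subseteq> P'"
    and "Pa \<in> T'" "Pb \<in> P'" "Pb \<notin> T'"
  shows "wt w (sym_diff U (\<Union>T')) =
    wt w (U \<inter> Pb) + wt w Pa - wt w (U \<inter> Pa) + (\<Sum>Q\<in>P' - {Pa, Pb}. part_cost w U T' Q)"
proof -
  have "finite P'" "Pa \<in> P'" "Pa \<noteq> Pb"
    using is_partition_finite(1)[OF assms(1,2)] assms by auto
  hence "(\<Sum>Q\<in>P'. part_cost w U T' Q) = part_cost w U T' Pa + part_cost w U T' Pb
      + (\<Sum>Q\<in>P' - {Pa} - {Pb}. part_cost w U T' Q)"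
    using assms(6) by (simp add: sum.remove)
  moreover have "P' - {Pa} - {Pb} = P' - {Pa, Pb}" by auto
  ultimately show ?thesis
    using wt_sym_diff_Union_eq_sum_part_cost[OF assms(1-4)] assms(5,7)
    unfolding part_cost_def by simp
qed

lemma part_weight_bounds:
  assumes "finite V" "\<And>v. v \<in> V \<Longrightarrow> w v > 0" "is_partition V P'" "Q \<in> P'"
  shows "0 < wt w Q" "0 \<le> wt w (U \<inter> Q)" "wt w (U \<inter> Q) \<le> wt w Q"
proof -
  have "finite Q" using is_partition_finite(2)[OF assms(1,3,4)] .
  moreover have "Q \<noteq> {}" "Q \<subseteq> V" using assms(3,4) unfolding is_partition_def by auto
  ultimately show "0 < wt w Q" "0 \<le> wt w (U \<inter> Q)" "wt w (U \<inter> Q) \<le> wt w Q"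
    using assms(2) wt_pos[of Q w] wt_Int_bounds[of Q w U] by (auto intro: less_imp_le)
qed

lemma phi_star_le_wt_sym_diff:
  assumes "finite V" "\<And>v. v \<in> V \<Longrightarrow> w v > 0" "is_partition V P'"
    and "\<Union>T \<subseteq> V" "T' \<subseteq> P'" "Pa \<in> T'" "Pb \<in> P'" "Pb \<notin> T'"
  shows "phi_star w P' Pa Pb T \<le> wt w (sym_diff (\<Union>T) (\<Union>T'))"
proof -
  have "(\<Sum>Q\<in>P' - {Pa, Pb}. wt w Q * peak (wt w (\<Union>T \<inter> Q) / wt w Q))
      \<le> (\<Sum>Q\<in>P' - {Pa, Pb}. part_cost w (\<Union>T) T' Q)"
    using part_weight_bounds[OF assms(1-3)] by (intro sum_mono peak_le_part_cost) auto
  thus ?thesis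
    unfolding phi_star_def wt_sym_diff_Union_split[OF assms(1,3-8)] by simp
qed

lemma wt_sym_diff_majority_eq_phi_star:
  assumes "finite V" "\<And>v. v \<in> V \<Longrightarrow> w v > 0" "is_partition V P'"
    and "\<Union>S \<subseteq> V" "Pa \<in> P'" "Pb \<in> P'" "Pa \<noteq> Pb"
  defines "S' \<equiv> {Pa} \<union> {Q \<in> P' - {Pa, Pb}. wt w (\<Union>S \<inter> Q) > wt w Q / 2}"
  shows "wt w (sym_diff (\<Union>S) (\<Union>S')) = phi_star w P' Pa Pb S"
proof -
  have "(\<Sum>Q\<in>P' - {Pa, Pb}. part_cost w (\<Union>S) S' Q)
      = (\<Sum>Q\<in>P' - {Pa, Pb}. wt w Q * peak (wt w (\<Union>S \<inter> Q) / wt w Q))"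
    using part_weight_bounds[OF assms(1-3)]
    by (intro sum.cong refl part_cost_majority_eq_peak) (auto simp: S'_def)
  moreover have "S' \<subseteq> P'" "Pa \<in> S'" "Pb \<notin> S'" using assms(5,7) unfolding S'_def by auto
  ultimately show ?thesis
    unfolding phi_star_def using wt_sym_diff_Union_split[OF assms(1,3,4)] assms(6) by simp
qed

theorem proposition9:
  fixes V :: "'a set" and w :: "'a \<Rightarrow> real"
    and P P' :: "'a set set" and Pa Pb :: "'a set" and S :: "'a set set"
  assumes "finite V"
    and "\<And>v. v \<in> V \<Longrightarrow> w v > 0"
    and "is_partition V P" and "is_partition V P'"
    and "Pa \<in> P'" and "Pb \<in> P'" and "Pa \<noteq> Pb"
    and "S \<subseteq> P" and "S \<noteq> {}" and "S \<noteq> P"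
    and "\<And>T. T \<subseteq> P \<Longrightarrow> T \<noteq> {} \<Longrightarrow> T \<noteq> P \<Longrightarrow>
            phi_star w P' Pa Pb S \<le> phi_star w P' Pa Pb T"
  defines "S' \<equiv> {Pa} \<union> {Q \<in> P' - {Pa, Pb}. wt w (\<Union>S \<inter> Q) > wt w Q / 2}"
  shows "S' \<subseteq> P' \<and> Pa \<in> S' \<and> Pb \<notin> S' \<and>
    (\<forall>T T'. T \<subseteq> P \<and> T \<noteq> {} \<and> T \<noteq> P \<and> T' \<subseteq> P' \<and> Pa \<in> T' \<and> Pb \<notin> T' \<longrightarrow>
       wt w (sym_diff (\<Union>S) (\<Union>S')) \<le> wt w (sym_diff (\<Union>T) (\<Union>T')))"
proof (intro conjI allI impI)
  show "S' \<subseteq> P'" "Pa \<in> S'" "Pb \<notin> S'" using assms(5,7) unfolding S'_def by auto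
  have UP: "\<Union>P = V" using assms(3) unfolding is_partition_def by simp
  fix T T' assume T: "T \<subseteq> P \<and> T \<noteq> {} \<and> T \<noteq> P \<and> T' \<subseteq> P' \<and> Pa \<in> T' \<and> Pb \<notin> T'"
  have "wt w (sym_diff (\<Union>S) (\<Union>S')) = phi_star w P' Pa Pb S"
    unfolding S'_def using assms(8) UP
    by (intro wt_sym_diff_majority_eq_phi_star[OF assms(1,2,4)] assms(5-7)) auto
  also have "\<dots> \<le> phi_star w P' Pa Pb T" using assms(11) T by blast
  also have "\<dots> \<le> wt w (sym_diff (\<Union>T) (\<Union>T'))"
    using T UP assms(6) by (intro phi_star_le_wt_sym_diff[OF assms(1,2,4)]) auto
  finally show "wt w (sym_diff (\<Union>S) (\<Union>S')) \<le> wt w (sym_diff (\<Union>T) (\<Union>T'))" .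
qed

end
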